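(* Let $p$ be a prime, let $G$ be a finite group of $p$-power order, let $\varphi\colon A\to B$ be an isomorphism between subgroups $A,B$ of $G$, and let $G^*=\langle G,t\mid t^{-1}at=\varphi(a),\ a\in A\rangle$. If $G^*$ is residually $p$, then there exists a central filtration $(G_i)$ of $G$, compatible with $(G,\varphi)$, such that for all $i<j$, all $a\in A\cap G_i$ and all $b\in B\cap G_i$, the order of the automorphism of $H(G_i/G_j,\ c_b\circ\varphi_{ij}\circ c_a)$ induced by $c_b\circ\varphi_{ij}\circ c_a$ is a power of $p$.
   Context: A group is residually $p$ if for every non-trivial element there is a homomorphism to a finite $p$-group not killing it. A filtration of $G$ is a sequence $(G_1,\dots,G_n)$ of normal subgroups with $G=G_1\supsetneq\cdots\supsetneq G_n=\{1\}$, with $G_i=\{1\}$ for $i>n$; it is central if $G_i/G_{i+1}$ is central in $G/G_{i+1}$ for each $i$; it is compatible with $(G,\varphi)$ if $\varphi$ restricts to an isomorphism $A\cap G_i\to B\cap G_i$ for each $i$. For $i<j$, $\varphi_{ij}\colon (A\cap G_i)G_j/G_j\to (B\cap G_i)G_j/G_j$ is the isomorphism induced by $\varphi$. For $g\in G$, $c_g(x)=g^{-1}xg$; for $a\in A\cap G_i$ (resp. $b\in B\cap G_i$), $c_a$ (resp. $c_b$) denotes the induced automorphism of $(A\cap G_i)G_j/G_j$ (resp. $(B\cap G_i)G_j/G_j$), so $c_b\circ\varphi_{ij}\circ c_a$ is an isomorphism between subgroups of $G_i/G_j$. For a group $Q$ and an isomorphism $\psi\colon A'\to B'$ between subgroups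 of $Q$, the core $H(Q,\psi)$ is $\bigcap_k H_k$ where $H_0=A'\cap B'$ and $H_{k+1}=\psi^{-1}(H_k)\cap H_k\cap\psi(H_k)$ (with $\psi^{-1}(H_k)=\{a\in A':\psi(a)\in H_k\}$); $\psi$ restricts to an automorphism of $H(Q,\psi)$. *)

theory Defs
  imports "HOL-Algebra.Algebra" "HOL-Computational_Algebra.Primes"
begin

datatype 'g hnn_letter = Gen 'g | Tl | Tinv

inductive_set hnn_rel ::
  "('g, 'm) monoid_scheme \<Rightarrow> ('g \<Rightarrow> 'g) \<Rightarrow> 'g set \<Rightarrow> ('g hnn_letter list \<times> 'g hnn_letter list) set"
  for G :: "('g, 'm) monoid_scheme" and \<phi> :: "'g \<Rightarrow> 'g" and A :: "'g set"
where
  refl: "(w, w) \<in> hnn_rel G \<phi> A"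
| sym: "(u, v) \<in> hnn_rel G \<phi> A \<Longrightarrow> (v, u) \<in> hnn_rel G \<phi> A"
| trans: "(u, v) \<in> hnn_rel G \<phi> A \<Longrightarrow> (v, w) \<in> hnn_rel G \<phi> A \<Longrightarrow> (u, w) \<in> hnn_rel G \<phi> A"
| cong: "(u, v) \<in> hnn_rel G \<phi> A \<Longrightarrow> (x @ u @ y, x @ v @ y) \<in> hnn_rel G \<phi> A"
| one: "([Gen \<one>\<^bsub>G\<^esub>], []) \<in> hnn_rel G \<phi> A"
| mult: "g \<in> carrier G \<Longrightarrow> h \<in> carrier G \<Longrightarrow> ([Gen g, Gen h], [Gen (g \<otimes>\<^bsub>G\<^esub> h)]) \<in> hnn_rel G \<phi> A"
| t_tinv: "([Tl, Tinv], []) \<in> hnn_rel G \<phi> A"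
| tinv_t: "([Tinv, Tl], []) \<in> hnn_rel G \<phi> A"
| conj: "a \<in> A \<Longrightarrow> ([Tinv, Gen a, Tl], [Gen (\<phi> a)]) \<in> hnn_rel G \<phi> A"

definition hnn_words :: "('g, 'm) monoid_scheme \<Rightarrow> 'g hnn_letter list set" where
  "hnn_words G = {w. \<forall>l\<in>set w. (case l of Gen g \<Rightarrow> g \<in> carrier G | _ \<Rightarrow> True)}"

definition hnn_mult :: "('g, 'm) monoid_scheme \<Rightarrow> ('g \<Rightarrow> 'g) \<Rightarrow> 'g set \<Rightarrow>
    'g hnn_letter list set \<Rightarrow> 'g hnn_letter list set \<Rightarrow> 'g hnn_letter list set" where
  "hnn_mult G \<phi> A U V = Union ((\<lambda>(u, v). hnn_rel G \<phi> A `` {u @ v}) ` (Sigma U (\<lambda>_. V)))"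

definition HNN :: "('g, 'm) monoid_scheme \<Rightarrow> ('g \<Rightarrow> 'g) \<Rightarrow> 'g set \<Rightarrow> 'g hnn_letter list set monoid" where
  "HNN G \<phi> A =
    \<lparr> carrier = (\<lambda>w. hnn_rel G \<phi> A `` {w}) ` hnn_words G,
      monoid.mult = hnn_mult G \<phi> A,
      monoid.one = hnn_rel G \<phi> A `` {[]} \<rparr>"

text \<open>Every non-trivial element survives in some homomorphism to a finite p-group.
  (Target groups are taken with carrier type 'a set; every finite quotient of H
  has this type, so this is no restriction.)\<close>
definition residually_p :: "nat \<Rightarrow> 'a monoid \<Rightarrow> bool" where
  "residually_p p H \<longleftrightarrow>
     (\<forall>x\<in>carrier H. x \<noteq> \<one>\<^bsub>H\<^esub> \<longrightarrow>
        (\<exists>(P :: 'a set monoid) h. group P \<and> finite (carrier P) \<and> (\<exists>k. order P = p ^ k)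
            \<and> h \<in> hom H P \<and> h x \<noteq> \<one>\<^bsub>P\<^esub>))"

section \<open>Filtrations (indexed from 1)\<close>

definition filtration :: "('g, 'm) monoid_scheme \<Rightarrow> (nat \<Rightarrow> 'g set) \<Rightarrow> nat \<Rightarrow> bool" where
  "filtration G Gs n \<longleftrightarrow>
     1 \<le> n \<and> Gs 1 = carrier G \<and> Gs n = {\<one>\<^bsub>G\<^esub>}
     \<and> (\<forall>i. 1 \<le> i \<and> i < n \<longrightarrow> Gs (Suc i) \<subset> Gs i)
     \<and> (\<forall>i. n < i \<longrightarrow> Gs i = {\<one>\<^bsub>G\<^esub>})
     \<and> (\<forall>i. 1 \<le> i \<longrightarrow> Gs i \<lhd> G)"

text \<open>G_i/G_{i+1} is central in G/G_{i+1}: cosets of G_{i+1} of elements of G_i commute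
  with all cosets of G_{i+1}.\<close>
definition central_filtration :: "('g, 'm) monoid_scheme \<Rightarrow> (nat \<Rightarrow> 'g set) \<Rightarrow> nat \<Rightarrow> bool" where
  "central_filtration G Gs n \<longleftrightarrow>
     filtration G Gs n \<and>
     (\<forall>i. 1 \<le> i \<longrightarrow> (\<forall>x\<in>Gs i. \<forall>g\<in>carrier G.
         Gs (Suc i) #>\<^bsub>G\<^esub> (x \<otimes>\<^bsub>G\<^esub> g) = Gs (Suc i) #>\<^bsub>G\<^esub> (g \<otimes>\<^bsub>G\<^esub> x)))"

definition compatible ::
  "('g, 'm) monoid_scheme \<Rightarrow> ('g \<Rightarrow> 'g) \<Rightarrow> 'g set \<Rightarrow> 'g set \<Rightarrow> (nat \<Rightarrow> 'g set) \<Rightarrow> bool" where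
  "compatible G \<phi> A B Gs \<longleftrightarrow>
     (\<forall>i. 1 \<le> i \<longrightarrow> \<phi> \<in> iso (G\<lparr>carrier := A \<inter> Gs i\<rparr>) (G\<lparr>carrier := B \<inter> Gs i\<rparr>))"

text \<open>(A \<inter> G_i)G_j/G_j, as the set of cosets G_j x, x in A \<inter> G_i.\<close>
definition sub_quot :: "('g, 'm) monoid_scheme \<Rightarrow> 'g set \<Rightarrow> 'g set \<Rightarrow> 'g set \<Rightarrow> 'g set set" where
  "sub_quot G A Gi Gj = (\<lambda>x. Gj #>\<^bsub>G\<^esub> x) ` (A \<inter> Gi)"

text \<open>c_b o phi_ij o c_a : G_j x \<mapsto> G_j (b^-1 phi(a^-1 x a) b), for x in A \<inter> G_i.\<close>
definition twisted_map ::
  "('g, 'm) monoid_scheme \<Rightarrow> ('g \<Rightarrow> 'g) \<Rightarrow> 'g set \<Rightarrow> 'g set \<Rightarrow> 'g set \<Rightarrow> 'g \<Rightarrow> 'g \<Rightarrow> 'g set \<Rightarrow> 'g set" where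
  "twisted_map G \<phi> A Gi Gj a b C =
     Gj #>\<^bsub>G\<^esub> (inv\<^bsub>G\<^esub> b \<otimes>\<^bsub>G\<^esub>
        \<phi> (inv\<^bsub>G\<^esub> a \<otimes>\<^bsub>G\<^esub> (SOME x. x \<in> A \<inter> Gi \<and> C = Gj #>\<^bsub>G\<^esub> x) \<otimes>\<^bsub>G\<^esub> a) \<otimes>\<^bsub>G\<^esub> b)"

primrec core_seq :: "'q set \<Rightarrow> 'q set \<Rightarrow> ('q \<Rightarrow> 'q) \<Rightarrow> nat \<Rightarrow> 'q set" where
  "core_seq A' B' \<psi> 0 = A' \<inter> B'"
| "core_seq A' B' \<psi> (Suc k) =
     {x \<in> A'. \<psi> x \<in> core_seq A' B' \<psi> k} \<inter> core_seq A' B' \<psi> k \<inter> \<psi> ` core_seq A' B' \<psi> k"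

definition core :: "'q set \<Rightarrow> 'q set \<Rightarrow> ('q \<Rightarrow> 'q) \<Rightarrow> 'q set" where
  "core A' B' \<psi> = Inter (range (core_seq A' B' \<psi>))"

definition aut_order :: "'q set \<Rightarrow> ('q \<Rightarrow> 'q) \<Rightarrow> nat" where
  "aut_order H \<psi> = (LEAST n. 0 < n \<and> (\<forall>x\<in>H. (\<psi> ^^ n) x = x))"

end

theory Submission
  imports Defs
begin

text \<open>Every non-trivial \<open>g \<in> G\<close> survives in a finite \<open>p\<close>-quotient of \<open>G*\<close> (that \<open>G\<close> embeds in
  \<open>G*\<close> at all is seen from a permutation representation of \<open>G*\<close> on \<open>G\<close>). The product \<open>P\<close> of these
  quotients is a finite \<open>p\<close>-group containing \<open>G\<close>, in which \<open>\<phi>\<close> is conjugation by the image \<open>t\<close> of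
  the stable letter. Pulling back the upper central series of \<open>P\<close> gives a central filtration of \<open>G\<close>;
  it is compatible with \<open>\<phi>\<close> because its terms come from normal subgroups of \<open>P\<close>. Finally, on
  \<open>G\<^sub>i/G\<^sub>j\<close> the map \<open>c\<^sub>b \<circ> \<phi>\<^sub>i\<^sub>j \<circ> c\<^sub>a\<close> is induced by conjugation with \<open>f a \<cdot> t \<cdot> f b \<in> P\<close>,
  whose order divides \<open>|P|\<close>, so its restriction to the core has \<open>p\<close>-power order.\<close>

lemma (in group) m_inv_cancel_left [simp]:
  "x \<in> carrier G \<Longrightarrow> y \<in> carrier G \<Longrightarrow> x \<otimes> (inv x \<otimes> y) = y"
  by (simp flip: m_assoc)

lemma (in group) inv_m_cancel_left [simp]:
  "x \<in> carrier G \<Longrightarrow> y \<in> carrier G \<Longrightarrow> inv x \<otimes> (x \<otimes> y) = y"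
  by (simp flip: m_assoc)

lemma (in group) rcos_eq_iff:
  assumes "subgroup H G" "x \<in> carrier G" "y \<in> carrier G"
  shows "H #> x = H #> y \<longleftrightarrow> x \<otimes> inv y \<in> H"
proof
  assume "H #> x = H #> y"
  then have "x \<in> H #> y" using rcos_self[OF assms(2,1)] by simp
  then show "x \<otimes> inv y \<in> H" using subgroup.rcos_module_imp[OF assms(1) is_group assms(3)] by blast
next
  assume "x \<otimes> inv y \<in> H"
  then have "x \<in> H #> y" using subgroup.rcos_module_rev[OF assms(1) is_group assms(3,2)] by blast
  then show "H #> x = H #> y" using repr_independence[OF _ assms(3,1)] by simp
qed

lemma (in group_hom) normal_vimage:
  assumes "N \<lhd> H"
  shows "{x \<in> carrier G. h x \<in> N} \<lhd> G"
proof -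
  interpret N: normal N H by fact
  show ?thesis
  proof (rule G.normal_invI)
    show "subgroup {x \<in> carrier G. h x \<in> N} G"
      by (rule G.subgroupI) (auto simp: N.m_inv_closed N.m_closed)
    fix x k assume "x \<in> carrier G" "k \<in> {x \<in> carrier G. h x \<in> N}"
    then show "x \<otimes> k \<otimes> inv x \<in> {x \<in> carrier G. h x \<in> N}"
      using H.normal_invE(2)[OF assms, of "h x" "h k"] by simp
  qed
qed

lemma (in group_hom) vimage_rcos_eq_iff:
  assumes "N \<lhd> H" "x \<in> carrier G" "y \<in> carrier G"
  shows "{z \<in> carrier G. h z \<in> N} #> x = {z \<in> carrier G. h z \<in> N} #> y
         \<longleftrightarrow> N #>\<^bsub>H\<^esub> h x = N #>\<^bsub>H\<^esub> h y"
  using G.rcos_eq_iff[OF normal_imp_subgroup[OF normal_vimage[OF assms(1)]] assms(2,3)]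
    H.rcos_eq_iff[OF normal_imp_subgroup[OF assms(1)]] assms(2,3) by simp

lemma (in normal) rcos_conj_cong:
  assumes "H #> u = H #> v" "u \<in> carrier G" "v \<in> carrier G" "c \<in> carrier G"
  shows "H #> (inv c \<otimes> u \<otimes> c) = H #> (inv c \<otimes> v \<otimes> c)"
proof -
  have "u \<otimes> inv v \<in> H" using assms rcos_eq_iff[OF subgroup_axioms] by simp
  then have "inv c \<otimes> (u \<otimes> inv v) \<otimes> inv (inv c) \<in> H"
    using normal_invE(2)[OF normal_axioms inv_closed[OF assms(4)]] assms by simp
  then have "inv c \<otimes> (u \<otimes> inv v) \<otimes> c \<in> H" using assms(4) by simp
  moreover have "(inv c \<otimes> u \<otimes> c) \<otimes> inv (inv c \<otimes> v \<otimes> c) = inv c \<otimes> (u \<otimes> inv v) \<otimes> c"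
    using assms(2-4) by (simp add: inv_mult_group m_assoc)
  ultimately show ?thesis
    using assms(2-4) rcos_eq_iff[OF subgroup_axioms] by simp
qed

lemma (in group) conj_conj:
  assumes "x \<in> carrier G" "y \<in> carrier G" "z \<in> carrier G"
  shows "inv y \<otimes> (inv x \<otimes> z \<otimes> x) \<otimes> y = inv (x \<otimes> y) \<otimes> z \<otimes> (x \<otimes> y)"
  using assms by (simp add: inv_mult_group m_assoc)

lemma (in normal) conj_mem_iff:
  assumes "c \<in> carrier G" "h \<in> carrier G"
  shows "inv c \<otimes> h \<otimes> c \<in> H \<longleftrightarrow> h \<in> H"
proof
  assume "inv c \<otimes> h \<otimes> c \<in> H"
  then have "c \<otimes> (inv c \<otimes> h \<otimes> c) \<otimes> inv c \<in> H" using normal_invE(2)[OF normal_axioms assms(1)] by blast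
  then show "h \<in> H" using assms by (simp add: m_assoc)
next
  assume "h \<in> H"
  then have "inv c \<otimes> h \<otimes> inv (inv c) \<in> H" using normal_invE(2)[OF normal_axioms inv_closed[OF assms(1)]] by blast
  then show "inv c \<otimes> h \<otimes> c \<in> H" using assms by simp
qed

section \<open>Centres and the upper central series\<close>

definition center :: "('a, 'b) monoid_scheme \<Rightarrow> 'a set" where
  "center G = {z \<in> carrier G. \<forall>y\<in>carrier G. z \<otimes>\<^bsub>G\<^esub> y = y \<otimes>\<^bsub>G\<^esub> z}"

lemma center_commute: "z \<in> center G \<Longrightarrow> y \<in> carrier G \<Longrightarrow> z \<otimes>\<^bsub>G\<^esub> y = y \<otimes>\<^bsub>G\<^esub> z"
  by (simp add: center_def)

lemma (in group) center_normal: "center G \<lhd> G"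
proof (rule normal_invI)
  show "subgroup (center G) G"
  proof (rule subgroupI)
    fix z assume z: "z \<in> center G"
    then have zc: "z \<in> carrier G" by (simp add: center_def)
    have "inv z \<otimes> y = y \<otimes> inv z" if y: "y \<in> carrier G" for y
    proof -
      have "inv z \<otimes> y = inv z \<otimes> (y \<otimes> z) \<otimes> inv z" using zc y by (simp add: m_assoc)
      also have "\<dots> = inv z \<otimes> (z \<otimes> y) \<otimes> inv z" using center_commute[OF z y] by simp
      also have "\<dots> = y \<otimes> inv z" using zc y by (simp add: m_assoc)
      finally show ?thesis .
    qed
    then show "inv z \<in> center G" using zc by (simp add: center_def)
  next
    fix a b assume a: "a \<in> center G" and b: "b \<in> center G"
    then have ac: "a \<in> carrier G" and bc: "b \<in> carrier G" by (simp_all add: center_def)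
    have "a \<otimes> b \<otimes> y = y \<otimes> (a \<otimes> b)" if y: "y \<in> carrier G" for y
    proof -
      have "a \<otimes> b \<otimes> y = a \<otimes> (y \<otimes> b)" using ac bc y center_commute[OF b y] by (simp add: m_assoc)
      also have "\<dots> = (a \<otimes> y) \<otimes> b" using ac bc y by (simp add: m_assoc)
      also have "\<dots> = (y \<otimes> a) \<otimes> b" using center_commute[OF a y] by simp
      also have "\<dots> = y \<otimes> (a \<otimes> b)" using ac bc y by (simp add: m_assoc)
      finally show ?thesis .
    qed
    then show "a \<otimes> b \<in> center G" using ac bc by (simp add: center_def)
  qed (auto simp: center_def)
next
  fix x z assume x: "x \<in> carrier G" and z: "z \<in> center G"
  then have zc: "z \<in> carrier G" by (simp add: center_def)
  have "x \<otimes> z \<otimes> inv x = z \<otimes> x \<otimes> inv x" using center_commute[OF z x] by simp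
  also have "\<dots> = z" using x zc by (simp add: m_assoc)
  finally show "x \<otimes> z \<otimes> inv x \<in> center G" using z by simp
qed

lemma (in group) conjugation_orbit_eq_singleton_iff:
  assumes x: "x \<in> carrier G"
  shows "orbit G (\<lambda>g. \<lambda>h \<in> carrier G. g \<otimes> h \<otimes> inv g) x = {x} \<longleftrightarrow> x \<in> center G"
    (is "orbit G ?conj x = {x} \<longleftrightarrow> _")
proof
  assume ob: "orbit G ?conj x = {x}"
  have "y \<otimes> x = x \<otimes> y" if y: "y \<in> carrier G" for y
  proof -
    have "?conj y x \<in> orbit G ?conj x" unfolding orbit_def using y by blast
    then have "y \<otimes> x \<otimes> inv y = x" using ob x by auto
    then show ?thesis using x y by (metis inv_solve_right m_closed)
  qed
  then show "x \<in> center G" using x unfolding center_def by auto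
next
  assume xZ: "x \<in> center G"
  have "?conj g x = x" if g: "g \<in> carrier G" for g
  proof -
    have "?conj g x = x \<otimes> g \<otimes> inv g" using x g center_commute[OF xZ g] by simp
    then show ?thesis using x g by (simp add: m_assoc)
  qed
  then show "orbit G ?conj x = {x}" unfolding orbit_def using one_closed x by (auto intro!: exI[of _ \<one>])
qed

theorem pgroup_center_nontrivial:
  fixes P (structure)
  assumes grp: "group P" and fin: "finite (carrier P)" and ord: "order P = p ^ e"
    and p: "Factorial_Ring.prime p" and e: "0 < e"
  shows "center P \<noteq> {\<one>}"
proof
  assume Z1: "center P = {\<one>}"
  interpret group P by (rule grp)
  define conj where "conj = (\<lambda>g. \<lambda>h \<in> carrier P. g \<otimes> h \<otimes> inv g)"
  interpret conj: group_action P "carrier P" conj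
    unfolding conj_def by (rule action_by_conjugation)
  note orbit_one = conjugation_orbit_eq_singleton_iff[folded conj_def]
  let ?O = "orbits P (carrier P) conj"
  \<comment> \<open>Class equation: the only singleton orbit is that of \<open>\<one>\<close>, the others have size divisible by \<open>p\<close>.\<close>
  have "p dvd card ob" if ob: "ob \<in> ?O - {{\<one>}}" for ob
  proof -
    obtain x where x: "x \<in> carrier P" "ob = orbit P conj x" using ob unfolding orbits_def by auto
    have "card ob dvd p ^ e"
      using conj.orbit_stabilizer_theorem[OF x(1)] ord x(2) by (metis dvd_triv_left)
    then obtain i where "card ob = p ^ i" using divides_primepow_nat[OF p] by auto
    moreover have "card ob \<noteq> 1"
    proof
      assume "card ob = 1"
      then have "ob = {x}" using x conj.orbit_refl by (metis card_1_singletonE singletonD)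
      then show False using ob orbit_one x Z1 by auto
    qed
    ultimately show ?thesis by (cases i) auto
  qed
  then have "p dvd (\<Sum>ob\<in>?O - {{\<one>}}. card ob)" by (rule dvd_sum)
  moreover have "{\<one>} \<in> ?O" using orbit_one[of \<one>] Z1 unfolding orbits_def by auto
  then have "(\<Sum>ob\<in>?O. card ob) = 1 + (\<Sum>ob\<in>?O - {{\<one>}}. card ob)"
    using fin by (simp add: orbits_def sum.remove)
  moreover have "(\<Sum>ob\<in>?O. card ob) = order P"
  proof -
    have "(\<Sum>ob\<in>?O. card ob) = (\<Sum>ob\<in>?O. \<Sum>x\<in>ob. 1)" by (intro sum.cong) auto
    also have "\<dots> = (\<Sum>x\<in>carrier P. 1)" using conj.disjoint_sum[OF fin] .
    finally show ?thesis by (simp add: order_def)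
  qed
  moreover have "p dvd order P" using ord e by simp
  ultimately have "p dvd 1" by (metis dvd_add_left_iff)
  then show False using p by simp
qed

definition center_mod :: "('a, 'b) monoid_scheme \<Rightarrow> 'a set \<Rightarrow> 'a set" where
  "center_mod G N = {x \<in> carrier G. N #>\<^bsub>G\<^esub> x \<in> center (G Mod N)}"

lemma (in normal) rcos_group_hom: "group_hom G (G Mod H) ((#>) H)"
  using r_coset_hom_Mod factorgroup_is_group is_group by (simp add: group_hom_def group_hom_axioms_def)

lemma (in normal) center_mod_iff:
  "x \<in> center_mod G H \<longleftrightarrow> x \<in> carrier G \<and> (\<forall>y\<in>carrier G. H #> (x \<otimes> y) = H #> (y \<otimes> x))"
  unfolding center_mod_def center_def by (auto simp: FactGroup_def RCOSETS_def rcos_sum)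

lemma (in normal) center_mod_normal: "center_mod G H \<lhd> G"
  unfolding center_mod_def
  by (rule group_hom.normal_vimage[OF rcos_group_hom group.center_normal[OF factorgroup_is_group]])

lemma (in normal) subset_center_mod: "H \<subseteq> center_mod G H"
proof
  fix x assume x: "x \<in> H"
  then have "H #> x = \<one>\<^bsub>G Mod H\<^esub>" using coset_join2[OF _ subgroup_axioms x] by auto
  moreover have "\<one>\<^bsub>G Mod H\<^esub> \<in> center (G Mod H)"
    using subgroup.one_closed[OF normal_imp_subgroup[OF group.center_normal[OF factorgroup_is_group]]] .
  ultimately show "x \<in> center_mod G H" using x by (auto simp: center_mod_def)
qed

lemma (in normal) psubset_center_mod:
  assumes fin: "finite (carrier G)" and ord: "order G = p ^ e" and p: "Factorial_Ring.prime p"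
    and ne: "H \<noteq> carrier G"
  shows "H \<subset> center_mod G H"
proof -
  interpret Q: group "G Mod H" by (rule factorgroup_is_group)
  have "card (rcosets H) * card H = p ^ e" using lagrange[OF subgroup_axioms] ord by simp
  then obtain i where i: "card (rcosets H) = p ^ i" using divides_primepow_nat[OF p] by (metis dvd_triv_left)
  have "i \<noteq> 0"
  proof
    assume "i = 0"
    then have "card H = card (carrier G)" using lagrange[OF subgroup_axioms] i by (simp add: order_def)
    then show False using ne fin subset by (metis card_subset_eq)
  qed
  moreover have "finite (carrier (G Mod H))" using fin by (simp add: FactGroup_def RCOSETS_def)
  moreover have "order (G Mod H) = p ^ i" using i by (simp add: order_def FactGroup_def)
  ultimately have "center (G Mod H) \<noteq> {\<one>\<^bsub>G Mod H\<^esub>}"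
    using pgroup_center_nontrivial[OF Q.is_group _ _ p] by blast
  moreover have "center (G Mod H) \<subseteq> carrier (G Mod H)" by (auto simp: center_def)
  moreover have "\<one>\<^bsub>G Mod H\<^esub> \<in> center (G Mod H)"
    using subgroup.one_closed[OF normal_imp_subgroup[OF Q.center_normal]] .
  ultimately obtain C where C: "C \<in> center (G Mod H)" "C \<noteq> H" by auto
  moreover have "C \<in> carrier (G Mod H)" using C(1) by (simp add: center_def)
  ultimately obtain x where x: "x \<in> carrier G" "H #> x \<in> center (G Mod H)" "H #> x \<noteq> H"
    by (auto simp: FactGroup_def RCOSETS_def)
  then have "x \<notin> H" using coset_join2[OF x(1) subgroup_axioms] by blast
  then show ?thesis using x subset_center_mod by (auto simp: center_mod_def)
qed

primrec upper_central_series :: "('a, 'b) monoid_scheme \<Rightarrow> nat \<Rightarrow> 'a set" where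
  "upper_central_series G 0 = {\<one>\<^bsub>G\<^esub>}"
| "upper_central_series G (Suc k) = center_mod G (upper_central_series G k)"

lemma (in group) upper_central_series_normal: "upper_central_series G k \<lhd> G"
  by (induction k) (simp_all add: one_is_normal normal.center_mod_normal)

lemma (in group) mono_upper_central_series: "mono (upper_central_series G)"
  unfolding mono_iff_le_Suc by (simp add: normal.subset_center_mod[OF upper_central_series_normal])

lemma (in group) upper_central_series_central:
  assumes "x \<in> upper_central_series G (Suc k)" "y \<in> carrier G"
  shows "upper_central_series G k #> (x \<otimes> y) = upper_central_series G k #> (y \<otimes> x)"
  using assms normal.center_mod_iff[OF upper_central_series_normal] by simp

lemma (in group) upper_central_series_order:
  assumes "finite (carrier G)" "order G = p ^ e" "Factorial_Ring.prime p"
  shows "upper_central_series G (order G) = carrier G"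
proof -
  have sub: "upper_central_series G k \<subseteq> carrier G" for k
    using normal_imp_subgroup[OF upper_central_series_normal] subgroup.subset by blast
  \<comment> \<open>the series grows strictly until it reaches \<open>G\<close>\<close>
  have "upper_central_series G k = carrier G \<or> k < card (upper_central_series G k)" for k
  proof (induction k)
    case (Suc k)
    show ?case
    proof (cases "upper_central_series G k = carrier G")
      case True
      then show ?thesis using sub[of "Suc k"] monoD[OF mono_upper_central_series, of k "Suc k"] by auto
    next
      case False
      then have "upper_central_series G k \<subset> upper_central_series G (Suc k)"
        using normal.psubset_center_mod[OF upper_central_series_normal assms] by simp
      then have "card (upper_central_series G k) < card (upper_central_series G (Suc k))"
        using sub assms(1) by (meson finite_subset psubset_card_mono)
      then show ?thesis using Suc False by simp
    qed
  qed simp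
  moreover have "card (upper_central_series G k) \<le> order G" for k
    unfolding order_def using sub assms(1) by (simp add: card_mono)
  ultimately show ?thesis by (meson leD)
qed

section \<open>The embedding of \<open>G\<close> in \<open>G*\<close>\<close>

fun letter_action :: "('g, 'm) monoid_scheme \<Rightarrow> ('g \<Rightarrow> 'g) \<Rightarrow> ('g \<Rightarrow> 'g) \<Rightarrow> 'g hnn_letter \<Rightarrow> 'g \<Rightarrow> 'g" where
  "letter_action G s s' (Gen g) = (\<lambda>x. if g \<in> carrier G \<and> x \<in> carrier G then g \<otimes>\<^bsub>G\<^esub> x else x)"
| "letter_action G s s' Tl = (\<lambda>x. if x \<in> carrier G then s x else x)"
| "letter_action G s s' Tinv = (\<lambda>x. if x \<in> carrier G then s' x else x)"

primrec word_action :: "('g, 'm) monoid_scheme \<Rightarrow> ('g \<Rightarrow> 'g) \<Rightarrow> ('g \<Rightarrow> 'g) \<Rightarrow> 'g hnn_letter list \<Rightarrow> 'g \<Rightarrow> 'g" where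
  "word_action G s s' [] = id"
| "word_action G s s' (l # w) = letter_action G s s' l \<circ> word_action G s s' w"

lemma word_action_append: "word_action G s s' (u @ v) = word_action G s s' u \<circ> word_action G s s' v"
  by (induction u) auto

text \<open>The defining relation \<open>t\<^sup>-\<^sup>1 a t = \<phi> a\<close> is respected
  exactly when \<open>s (\<phi> a \<otimes> x) = a \<otimes> s x\<close>.\<close>
lemma (in group) hnn_rel_word_action:
  assumes rel: "(u, v) \<in> hnn_rel G \<phi> A"
    and A: "A \<subseteq> carrier G" and phi: "\<And>a. a \<in> A \<Longrightarrow> \<phi> a \<in> carrier G"
    and s: "\<And>x. x \<in> carrier G \<Longrightarrow> s x \<in> carrier G"
    and s': "\<And>x. x \<in> carrier G \<Longrightarrow> s' x \<in> carrier G"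
    and s_s': "\<And>x. x \<in> carrier G \<Longrightarrow> s (s' x) = x"
    and s'_s: "\<And>x. x \<in> carrier G \<Longrightarrow> s' (s x) = x"
    and s_phi: "\<And>a x. a \<in> A \<Longrightarrow> x \<in> carrier G \<Longrightarrow> s (\<phi> a \<otimes> x) = a \<otimes> s x"
  shows "word_action G s s' u = word_action G s s' v"
  using rel
proof (induction rule: hnn_rel.induct)
  case (cong u v x y)
  then show ?case by (simp add: word_action_append)
next
  case (mult g h)
  then show ?case by (intro ext) (simp add: m_assoc)
next
  case (conj a)
  show ?case
  proof
    fix x
    show "word_action G s s' [Tinv, Gen a, Tl] x = word_action G s s' [Gen (\<phi> a)] x"
    proof (cases "x \<in> carrier G")
      case True
      have "s' (a \<otimes> s x) = s' (s (\<phi> a \<otimes> x))" using s_phi[OF conj True] by simp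
      then show ?thesis using conj A True phi s s'_s by auto
    qed simp
  qed
qed (auto simp: s s' s_s' s'_s)

definition coset_rep :: "'a set \<Rightarrow> 'a" where
  "coset_rep C = (SOME y. y \<in> C)"

lemma (in subgroup) coset_rep_rcos:
  assumes "group G" "x \<in> carrier G"
  shows "coset_rep (H #> x) \<in> carrier G" "H #> coset_rep (H #> x) = H #> x"
    "x \<otimes>\<^bsub>G\<^esub> inv\<^bsub>G\<^esub> coset_rep (H #> x) \<in> H"
proof -
  interpret group G by fact
  have r: "coset_rep (H #> x) \<in> H #> x"
    unfolding coset_rep_def using rcos_self[OF assms(2) subgroup_axioms] by (rule someI)
  then show rc: "coset_rep (H #> x) \<in> carrier G"
    using r_coset_subset_G[OF subset assms(2)] by blast
  show "H #> coset_rep (H #> x) = H #> x"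
    using repr_independence[OF r assms(2) subgroup_axioms] by simp
  then show "x \<otimes> inv coset_rep (H #> x) \<in> H"
    using rcos_eq_iff[OF subgroup_axioms assms(2) rc] by simp
qed

text \<open>Glue a map \<open>\<theta>\<close> on \<open>K\<close> and a map \<open>\<gamma>\<close> on right cosets of \<open>K\<close> into a map on \<open>G\<close>, using a
  transversal of the cosets.\<close>
definition coset_twist :: "('a, 'b) monoid_scheme \<Rightarrow> 'a set \<Rightarrow> ('a \<Rightarrow> 'a) \<Rightarrow> ('a set \<Rightarrow> 'a set) \<Rightarrow> 'a \<Rightarrow> 'a" where
  "coset_twist G K \<theta> \<gamma> x =
     \<theta> (x \<otimes>\<^bsub>G\<^esub> inv\<^bsub>G\<^esub> coset_rep (K #>\<^bsub>G\<^esub> x)) \<otimes>\<^bsub>G\<^esub> coset_rep (\<gamma> (K #>\<^bsub>G\<^esub> x))"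

lemma (in group) coset_twist:
  assumes K: "subgroup K G" and L: "subgroup L G" and \<theta>: "\<theta> ` K \<subseteq> L"
    and \<gamma>: "\<gamma> ` (rcosets K) \<subseteq> (rcosets L)" and x: "x \<in> carrier G"
  shows "coset_twist G K \<theta> \<gamma> x \<in> carrier G" "L #> coset_twist G K \<theta> \<gamma> x = \<gamma> (K #> x)"
proof -
  have k: "\<theta> (x \<otimes> inv coset_rep (K #> x)) \<in> L"
    using \<theta> subgroup.coset_rep_rcos(3)[OF K is_group x] by blast
  obtain y where y: "y \<in> carrier G" "\<gamma> (K #> x) = L #> y"
    using \<gamma> x unfolding RCOSETS_def by blast
  note r = subgroup.coset_rep_rcos[OF L is_group y(1)]
  have kc: "\<theta> (x \<otimes> inv coset_rep (K #> x)) \<in> carrier G" using k subgroup.subset[OF L] by blast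
  show "coset_twist G K \<theta> \<gamma> x \<in> carrier G" unfolding coset_twist_def y(2) using kc r(1) by simp
  show "L #> coset_twist G K \<theta> \<gamma> x = \<gamma> (K #> x)" unfolding coset_twist_def y(2)
    using rcos_eq_iff[OF L _ r(1)] kc r k by (simp add: m_assoc)
qed

lemma (in group) coset_twist_mult:
  assumes K: "subgroup K G" and L: "subgroup L G" and \<theta>: "\<theta> ` K \<subseteq> L"
    and \<theta>_mult: "\<And>a b. a \<in> K \<Longrightarrow> b \<in> K \<Longrightarrow> \<theta> (a \<otimes> b) = \<theta> a \<otimes> \<theta> b"
    and \<gamma>: "\<gamma> ` (rcosets K) \<subseteq> (rcosets L)" and k: "k \<in> K" and x: "x \<in> carrier G"
  shows "coset_twist G K \<theta> \<gamma> (k \<otimes> x) = \<theta> k \<otimes> coset_twist G K \<theta> \<gamma> x"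
proof -
  have kc: "k \<in> carrier G" using k subgroup.subset[OF K] by blast
  have Kkx: "K #> (k \<otimes> x) = K #> x" using rcos_eq_iff[OF K _ x] kc x k by (simp add: m_assoc)
  note r = subgroup.coset_rep_rcos[OF K is_group x]
  obtain y where y: "y \<in> carrier G" "\<gamma> (K #> x) = L #> y"
    using \<gamma> x unfolding RCOSETS_def by blast
  have "\<theta> (k \<otimes> x \<otimes> inv coset_rep (K #> x)) = \<theta> k \<otimes> \<theta> (x \<otimes> inv coset_rep (K #> x))"
    using \<theta>_mult[OF k r(3)] kc x r(1) by (simp add: m_assoc)
  moreover have "\<theta> k \<in> carrier G" "\<theta> (x \<otimes> inv coset_rep (K #> x)) \<in> carrier G"
    using \<theta> k r(3) subgroup.subset[OF L] by auto
  ultimately show ?thesis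
    unfolding coset_twist_def Kkx y(2) using subgroup.coset_rep_rcos(1)[OF L is_group y(1)]
    by (simp add: m_assoc)
qed

lemma (in group) coset_twist_inverse:
  assumes K: "subgroup K G" and L: "subgroup L G" and \<theta>: "\<theta> ` K \<subseteq> L"
    and \<gamma>: "\<gamma> ` (rcosets K) \<subseteq> (rcosets L)"
    and \<theta>': "\<And>k. k \<in> K \<Longrightarrow> \<theta>' (\<theta> k) = k" and \<gamma>': "\<And>C. C \<in> rcosets K \<Longrightarrow> \<gamma>' (\<gamma> C) = C"
    and x: "x \<in> carrier G"
  shows "coset_twist G L \<theta>' \<gamma>' (coset_twist G K \<theta> \<gamma> x) = x"
proof -
  let ?r = "coset_rep (K #> x)" and ?s = "coset_rep (\<gamma> (K #> x))" and ?k = "x \<otimes> inv coset_rep (K #> x)"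
  note r = subgroup.coset_rep_rcos[OF K is_group x]
  have Kx: "K #> x \<in> rcosets K" using x unfolding RCOSETS_def by blast
  have "\<gamma> (K #> x) \<in> rcosets L" using \<gamma> Kx by blast
  then obtain y where y: "y \<in> carrier G" "\<gamma> (K #> x) = L #> y"
    unfolding RCOSETS_def by blast
  have sc: "?s \<in> carrier G" using subgroup.coset_rep_rcos(1)[OF L is_group y(1)] y(2) by simp
  have kc: "\<theta> ?k \<in> carrier G" using \<theta> r(3) subgroup.subset[OF L] by auto
  have tw: "coset_twist G K \<theta> \<gamma> x = \<theta> ?k \<otimes> ?s" unfolding coset_twist_def ..
  have "L #> (\<theta> ?k \<otimes> ?s) = \<gamma> (K #> x)" using coset_twist(2)[OF K L \<theta> \<gamma> x] tw by simp
  then have "coset_twist G L \<theta>' \<gamma>' (coset_twist G K \<theta> \<gamma> x) = \<theta>' (\<theta> ?k \<otimes> ?s \<otimes> inv ?s) \<otimes> ?r"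
    unfolding tw coset_twist_def[of G L] by (simp add: \<gamma>'[OF Kx])
  also have "\<dots> = ?k \<otimes> ?r" using kc sc \<theta>'[OF r(3)] by (simp add: m_assoc)
  also have "\<dots> = x" using x r(1) by (simp add: m_assoc)
  finally show ?thesis .
qed

lemma iso_subgroupsD:
  assumes "\<phi> \<in> iso (G\<lparr>carrier := A\<rparr>) (G\<lparr>carrier := B\<rparr>)"
  shows "bij_betw \<phi> A B" "\<And>a b. a \<in> A \<Longrightarrow> b \<in> A \<Longrightarrow> \<phi> (a \<otimes>\<^bsub>G\<^esub> b) = \<phi> a \<otimes>\<^bsub>G\<^esub> \<phi> b"
  using assms unfolding iso_def hom_def by auto

lemma (in group) rcosets_bij_exists:
  assumes fin: "finite (carrier G)" and A: "subgroup A G" and B: "subgroup B G"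
    and card: "card A = card B"
  obtains \<beta> where "bij_betw \<beta> (rcosets B) (rcosets A)"
proof -
  have "card (rcosets A) * card A = card (rcosets B) * card A"
    using lagrange[OF A] lagrange[OF B] card by simp
  moreover have "card A > 0"
    using finite_subset[OF subgroup.subset[OF A] fin] subgroup.one_closed[OF A] by (auto simp: card_gt_0_iff)
  ultimately have "card (rcosets B) = card (rcosets A)" by simp
  moreover have "finite (rcosets A)" "finite (rcosets B)" using fin by (simp_all add: RCOSETS_def)
  ultimately show ?thesis using finite_same_card_bij that by blast
qed

text \<open>Since \<open>|G : A| = |G : B|\<close>, a bijection between the right cosets of \<open>B\<close> and of \<open>A\<close> glued with
  \<open>\<phi>\<^sup>-\<^sup>1 : B \<rightarrow> A\<close> gives a permutation \<open>s\<close> of \<open>G\<close> with \<open>s (\<phi> a \<otimes> x) = a \<otimes> s x\<close>.\<close>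
lemma (in group) twisting_permutation_exists:
  assumes fin: "finite (carrier G)" and A: "subgroup A G" and B: "subgroup B G"
    and iso: "\<phi> \<in> iso (G\<lparr>carrier := A\<rparr>) (G\<lparr>carrier := B\<rparr>)"
  shows "\<exists>s s'. (\<forall>x\<in>carrier G. s x \<in> carrier G \<and> s' x \<in> carrier G \<and> s (s' x) = x \<and> s' (s x) = x)
    \<and> (\<forall>a\<in>A. \<forall>x\<in>carrier G. s (\<phi> a \<otimes> x) = a \<otimes> s x)"
proof -
  define \<psi> where "\<psi> = inv_into A \<phi>"
  have "\<psi> \<in> iso (G\<lparr>carrier := B\<rparr>) (G\<lparr>carrier := A\<rparr>)"
    using group.iso_set_sym[OF subgroup_imp_group[OF A] iso] by (simp add: \<psi>_def)
  note \<phi>_bij = iso_subgroupsD(1)[OF iso] and \<psi>_bij = iso_subgroupsD(1)[OF this]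
    and \<psi>_mult = iso_subgroupsD(2)[OF this]
  have \<phi>A: "\<phi> ` A \<subseteq> B" and \<psi>B: "\<psi> ` B \<subseteq> A"
    using bij_betw_imp_surj_on[OF \<phi>_bij] bij_betw_imp_surj_on[OF \<psi>_bij] by simp_all
  have \<psi>_\<phi>: "\<And>a. a \<in> A \<Longrightarrow> \<psi> (\<phi> a) = a" and \<phi>_\<psi>: "\<And>b. b \<in> B \<Longrightarrow> \<phi> (\<psi> b) = b"
    unfolding \<psi>_def using \<phi>_bij bij_betw_inv_into_left bij_betw_inv_into_right by metis+
  obtain \<beta> where \<beta>: "bij_betw \<beta> (rcosets B) (rcosets A)"
    using rcosets_bij_exists[OF fin A B bij_betw_same_card[OF \<phi>_bij]] .
  define \<beta>' where "\<beta>' = inv_into (rcosets B) \<beta>"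
  have \<beta>B: "\<beta> ` (rcosets B) \<subseteq> (rcosets A)" and \<beta>'A: "\<beta>' ` (rcosets A) \<subseteq> (rcosets B)"
    using bij_betw_imp_surj_on[OF \<beta>] bij_betw_imp_surj_on[OF bij_betw_inv_into[OF \<beta>]]
    unfolding \<beta>'_def by simp_all
  have \<beta>'_\<beta>: "\<And>C. C \<in> rcosets B \<Longrightarrow> \<beta>' (\<beta> C) = C" and \<beta>_\<beta>': "\<And>C. C \<in> rcosets A \<Longrightarrow> \<beta> (\<beta>' C) = C"
    unfolding \<beta>'_def using \<beta> bij_betw_inv_into_left bij_betw_inv_into_right by metis+
  show ?thesis
  proof (intro exI conjI ballI)
    fix x assume x: "x \<in> carrier G"
    show "coset_twist G B \<psi> \<beta> x \<in> carrier G"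
      using coset_twist(1)[OF B A \<psi>B \<beta>B x] .
    show "coset_twist G A \<phi> \<beta>' x \<in> carrier G"
      using coset_twist(1)[OF A B \<phi>A \<beta>'A x] .
    show "coset_twist G B \<psi> \<beta> (coset_twist G A \<phi> \<beta>' x) = x"
      using coset_twist_inverse[OF A B \<phi>A \<beta>'A \<psi>_\<phi> \<beta>_\<beta>' x] .
    show "coset_twist G A \<phi> \<beta>' (coset_twist G B \<psi> \<beta> x) = x"
      using coset_twist_inverse[OF B A \<psi>B \<beta>B \<phi>_\<psi> \<beta>'_\<beta> x] .
  next
    fix a x assume a: "a \<in> A" and x: "x \<in> carrier G"
    have "\<phi> a \<in> B" using \<phi>A a by blast
    from coset_twist_mult[OF B A \<psi>B \<psi>_mult \<beta>B this x]
    show "coset_twist G B \<psi> \<beta> (\<phi> a \<otimes> x) = a \<otimes> coset_twist G B \<psi> \<beta> x"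
      using \<psi>_\<phi>[OF a] by simp
  qed
qed

lemma (in group) hnn_rel_Gen_Nil_imp_one:
  assumes fin: "finite (carrier G)" and A: "subgroup A G" and B: "subgroup B G"
    and iso: "\<phi> \<in> iso (G\<lparr>carrier := A\<rparr>) (G\<lparr>carrier := B\<rparr>)"
    and g: "g \<in> carrier G" and rel: "([Gen g], []) \<in> hnn_rel G \<phi> A"
  shows "g = \<one>"
proof -
  obtain s s' where s: "\<forall>x\<in>carrier G. s x \<in> carrier G \<and> s' x \<in> carrier G \<and> s (s' x) = x \<and> s' (s x) = x"
    and s_\<phi>: "\<forall>a\<in>A. \<forall>x\<in>carrier G. s (\<phi> a \<otimes> x) = a \<otimes> s x"
    using twisting_permutation_exists[OF fin A B iso] by blast
  have "\<phi> a \<in> carrier G" if "a \<in> A" for a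
    using that bij_betw_apply[OF iso_subgroupsD(1)[OF iso]] subgroup.subset[OF B] by blast
  from hnn_rel_word_action[OF rel subgroup.subset[OF A] this] s s_\<phi>
  have "word_action G s s' [Gen g] = word_action G s s' []" by blast
  then have "word_action G s s' [Gen g] \<one> = \<one>" by simp
  then show ?thesis using g by simp
qed

definition hnn_class :: "('g, 'm) monoid_scheme \<Rightarrow> ('g \<Rightarrow> 'g) \<Rightarrow> 'g set \<Rightarrow> 'g hnn_letter list \<Rightarrow> 'g hnn_letter list set" where
  "hnn_class G \<phi> A w = hnn_rel G \<phi> A `` {w}"

lemma hnn_class_eq:
  assumes "(u, v) \<in> hnn_rel G \<phi> A" shows "hnn_class G \<phi> A u = hnn_class G \<phi> A v"
  using hnn_rel.trans[OF assms] hnn_rel.trans[OF hnn_rel.sym[OF assms]]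
  unfolding hnn_class_def by blast

lemma hnn_class_self: "w \<in> hnn_class G \<phi> A w"
  unfolding hnn_class_def using hnn_rel.refl by blast

lemma hnn_mult_class: "hnn_mult G \<phi> A (hnn_class G \<phi> A u) (hnn_class G \<phi> A v) = hnn_class G \<phi> A (u @ v)"
proof -
  have "hnn_class G \<phi> A (u' @ v') = hnn_class G \<phi> A (u @ v)"
    if "(u, u') \<in> hnn_rel G \<phi> A" "(v, v') \<in> hnn_rel G \<phi> A" for u' v'
  proof (rule hnn_class_eq[symmetric, OF hnn_rel.trans])
    show "(u @ v, u' @ v) \<in> hnn_rel G \<phi> A" using hnn_rel.cong[OF that(1), of "[]" v] by simp
    show "(u' @ v, u' @ v') \<in> hnn_rel G \<phi> A" using hnn_rel.cong[OF that(2), of u' "[]"] by simp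
  qed
  then have "hnn_mult G \<phi> A (hnn_class G \<phi> A u) (hnn_class G \<phi> A v) =
      \<Union>((\<lambda>_. hnn_class G \<phi> A (u @ v)) ` (hnn_class G \<phi> A u \<times> hnn_class G \<phi> A v))"
    unfolding hnn_mult_def by (intro arg_cong[of _ _ Union] image_cong) (auto simp: hnn_class_def)
  also have "\<dots> = hnn_class G \<phi> A (u @ v)" using hnn_class_self[of u] hnn_class_self[of v] by blast
  finally show ?thesis .
qed

lemma HNN_simps:
  "carrier (HNN G \<phi> A) = hnn_class G \<phi> A ` hnn_words G"
  "x \<otimes>\<^bsub>HNN G \<phi> A\<^esub> y = hnn_mult G \<phi> A x y"
  "\<one>\<^bsub>HNN G \<phi> A\<^esub> = hnn_class G \<phi> A []"
  unfolding HNN_def hnn_class_def by auto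

lemma hnn_words_simps [simp]:
  "[] \<in> hnn_words G"
  "Gen x # w \<in> hnn_words G \<longleftrightarrow> x \<in> carrier G \<and> w \<in> hnn_words G"
  "Tl # w \<in> hnn_words G \<longleftrightarrow> w \<in> hnn_words G"
  "Tinv # w \<in> hnn_words G \<longleftrightarrow> w \<in> hnn_words G"
  unfolding hnn_words_def by auto

lemma (in group) hnn_class_Gen_neq_one:
  assumes "finite (carrier G)" "subgroup A G" "subgroup B G"
    and "\<phi> \<in> iso (G\<lparr>carrier := A\<rparr>) (G\<lparr>carrier := B\<rparr>)"
    and "g \<in> carrier G" "g \<noteq> \<one>"
  shows "hnn_class G \<phi> A [Gen g] \<noteq> \<one>\<^bsub>HNN G \<phi> A\<^esub>"
proof
  assume "hnn_class G \<phi> A [Gen g] = \<one>\<^bsub>HNN G \<phi> A\<^esub>"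
  then have "([], [Gen g]) \<in> hnn_rel G \<phi> A"
    using hnn_class_self[of "[Gen g]" G \<phi> A] by (simp add: HNN_simps hnn_class_def)
  then show False using hnn_rel_Gen_Nil_imp_one[OF assms(1-5) hnn_rel.sym] assms(6) by blast
qed

section \<open>Finite \<open>p\<close>-quotients of \<open>G*\<close>\<close>

lemma hom_HNN_restrict:
  fixes P (structure)
  assumes P: "group P" and h: "h \<in> hom (HNN G \<phi> A) P" and A: "A \<subseteq> carrier G"
  shows "(\<lambda>x. h (hnn_class G \<phi> A [Gen x])) \<in> hom G P"
    and "h (hnn_class G \<phi> A [Tl]) \<in> carrier P"
    and "\<And>a. a \<in> A \<Longrightarrow> h (hnn_class G \<phi> A [Gen (\<phi> a)]) =
        inv (h (hnn_class G \<phi> A [Tl])) \<otimes> h (hnn_class G \<phi> A [Gen a]) \<otimes> h (hnn_class G \<phi> A [Tl])"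
proof -
  interpret group P by (rule P)
  let ?c = "hnn_class G \<phi> A"
  have hc: "\<And>w. w \<in> hnn_words G \<Longrightarrow> h (?c w) \<in> carrier P"
    using h unfolding hom_def HNN_simps by auto
  have hm: "h (?c (u @ v)) = h (?c u) \<otimes> h (?c v)" if "u \<in> hnn_words G" "v \<in> hnn_words G" for u v
    using h that unfolding hom_def HNN_simps by (auto simp flip: hnn_mult_class)
  have hrel: "h (?c u) = h (?c v)" if "(u, v) \<in> hnn_rel G \<phi> A" for u v
    using hnn_class_eq[OF that] by simp
  show "(\<lambda>x. h (?c [Gen x])) \<in> hom G P"
    using hc hm[of "[Gen _]" "[Gen _]"] hrel[OF hnn_rel.mult] by (auto intro!: homI)
  show tc: "h (?c [Tl]) \<in> carrier P" using hc by simp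
  have one: "h (?c []) = \<one>"
    using hm[of "[]" "[]"] hc[of "[]"] by simp
  have "h (?c [Tinv]) \<otimes> h (?c [Tl]) = \<one>"
    using hm[of "[Tinv]" "[Tl]"] hrel[OF hnn_rel.tinv_t] one by simp
  then have ti: "h (?c [Tinv]) = inv (h (?c [Tl]))" using tc hc by (simp add: inv_equality)
  fix a assume a: "a \<in> A"
  then have "h (?c [Gen (\<phi> a)]) = h (?c [Tinv]) \<otimes> (h (?c [Gen a]) \<otimes> h (?c [Tl]))"
    using hrel[OF hnn_rel.conj[OF a]] hm[of "[Tinv]" "[Gen a, Tl]"] hm[of "[Gen a]" "[Tl]"] A by auto
  then show "h (?c [Gen (\<phi> a)]) = inv (h (?c [Tl])) \<otimes> h (?c [Gen a]) \<otimes> h (?c [Tl])"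
    using ti tc hc[of "[Gen a]"] a A by (auto simp: m_assoc)
qed

lemma hom_into_product_group:
  assumes "\<And>i. i \<in> I \<Longrightarrow> h i \<in> hom G (Q i)"
  shows "(\<lambda>x. \<lambda>i\<in>I. h i x) \<in> hom G (product_group I Q)"
proof (rule homI)
  fix x y assume "x \<in> carrier G" "y \<in> carrier G"
  then show "(\<lambda>i\<in>I. h i x) \<in> carrier (product_group I Q)"
    "(\<lambda>i\<in>I. h i (x \<otimes>\<^bsub>G\<^esub> y)) = (\<lambda>i\<in>I. h i x) \<otimes>\<^bsub>product_group I Q\<^esub> (\<lambda>i\<in>I. h i y)"
    using assms hom_in_carrier hom_mult by (fastforce intro: restrict_ext)+
qed

lemma order_product_group: "finite I \<Longrightarrow> order (product_group I Q) = (\<Prod>i\<in>I. order (Q i))"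
  by (simp add: order_def card_PiE)

lemma (in group) residually_p_HNN_imp_embedding:
  assumes fin: "finite (carrier G)" and A: "subgroup A G" and B: "subgroup B G"
    and iso: "\<phi> \<in> iso (G\<lparr>carrier := A\<rparr>) (G\<lparr>carrier := B\<rparr>)"
    and res: "residually_p p (HNN G \<phi> A)"
  shows "\<exists>(P :: ('a \<Rightarrow> 'a hnn_letter list set set) monoid) f t.
    group P \<and> finite (carrier P) \<and> (\<exists>k. order P = p ^ k) \<and> f \<in> hom G P \<and> inj_on f (carrier G) \<and>
    t \<in> carrier P \<and> (\<forall>a\<in>A. f (\<phi> a) = inv\<^bsub>P\<^esub> t \<otimes>\<^bsub>P\<^esub> f a \<otimes>\<^bsub>P\<^esub> t)"
proof -
  let ?c = "hnn_class G \<phi> A"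
  define I where "I = carrier G - {\<one>}"
  have "\<exists>(Q :: 'a hnn_letter list set set monoid) h. group Q \<and> finite (carrier Q) \<and> (\<exists>k. order Q = p ^ k)
      \<and> h \<in> hom (HNN G \<phi> A) Q \<and> h (?c [Gen g]) \<noteq> \<one>\<^bsub>Q\<^esub>" if g: "g \<in> I" for g
  proof -
    have "?c [Gen g] \<in> carrier (HNN G \<phi> A)" using g by (simp add: I_def HNN_simps)
    moreover have "?c [Gen g] \<noteq> \<one>\<^bsub>HNN G \<phi> A\<^esub>" using hnn_class_Gen_neq_one[OF fin A B iso] g by (simp add: I_def)
    ultimately show ?thesis using res unfolding residually_p_def by blast
  qed
  then obtain Q :: "'a \<Rightarrow> 'a hnn_letter list set set monoid" and h k
    where Q: "\<And>g. g \<in> I \<Longrightarrow> group (Q g) \<and> finite (carrier (Q g)) \<and> order (Q g) = p ^ k g"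
      and h: "\<And>g. g \<in> I \<Longrightarrow> h g \<in> hom (HNN G \<phi> A) (Q g)"
      and h_ne: "\<And>g. g \<in> I \<Longrightarrow> h g (?c [Gen g]) \<noteq> \<one>\<^bsub>Q g\<^esub>"
    by metis
  note restr = hom_HNN_restrict[OF _ h subgroup.subset[OF A]]
  define P where "P = product_group I Q"
  define f where "f x = (\<lambda>g\<in>I. h g (?c [Gen x]))" for x
  define t where "t = (\<lambda>g\<in>I. h g (?c [Tl]))"
  have grpP: "group P" using Q by (simp add: P_def)
  have hom: "f \<in> hom G P"
    unfolding f_def P_def using restr(1) Q by (intro hom_into_product_group) blast
  have "kernel G P f = {\<one>}"
  proof -
    have "x = \<one>" if "x \<in> carrier G" "f x = \<one>\<^bsub>P\<^esub>" for x
    proof (rule ccontr)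
      assume "x \<noteq> \<one>"
      then have "x \<in> I" using that(1) by (simp add: I_def)
      then show False using h_ne[of x] fun_cong[OF that(2), of x] by (simp add: P_def f_def)
    qed
    then show ?thesis using hom_one[OF hom is_group grpP] by (auto simp: kernel_def)
  qed
  then have "inj_on f (carrier G)"
    using group_hom.inj_iff_trivial_ker[of G P f] hom grpP by (simp add: group_hom_def group_hom_axioms_def is_group)
  moreover have "finite I" using fin by (simp add: I_def)
  then have "finite (carrier P)" "order P = p ^ (\<Sum>g\<in>I. k g)"
    using Q by (simp_all add: P_def order_product_group power_sum finite_PiE)
  moreover have "t \<in> carrier P" using restr(2) Q by (auto simp: P_def t_def)
  moreover have "f (\<phi> a) = inv\<^bsub>P\<^esub> t \<otimes>\<^bsub>P\<^esub> f a \<otimes>\<^bsub>P\<^esub> t" if a: "a \<in> A" for a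
    using restr(2) restr(3)[OF _ _ a] Q \<open>t \<in> carrier P\<close> by (auto simp: P_def f_def t_def intro!: restrict_ext)
  ultimately show ?thesis using grpP hom by blast
qed

lemma strict_chain_of_mono:
  fixes L :: "nat \<Rightarrow> 'a set"
  assumes "mono L"
  shows "\<exists>Gs n. 1 \<le> n \<and> Gs 1 = L N \<and> Gs n = L 0 \<and> (\<forall>i. n < i \<longrightarrow> Gs i = L 0)
    \<and> (\<forall>i. 1 \<le> i \<and> i < n \<longrightarrow> Gs (Suc i) \<subset> Gs i \<and> (\<exists>k. Gs i = L (Suc k) \<and> Gs (Suc i) = L k))
    \<and> (\<forall>i. \<exists>k. Gs i = L k)"
proof (induction N)
  case 0
  show ?case by (rule exI[of _ "\<lambda>_. L 0"], rule exI[of _ 1]) auto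
next
  case (Suc N)
  then obtain Gs n where Gs: "1 \<le> n" "Gs 1 = L N" "Gs n = L 0" "\<forall>i. n < i \<longrightarrow> Gs i = L 0"
    "\<forall>i. 1 \<le> i \<and> i < n \<longrightarrow> Gs (Suc i) \<subset> Gs i \<and> (\<exists>k. Gs i = L (Suc k) \<and> Gs (Suc i) = L k)"
    "\<forall>i. \<exists>k. Gs i = L k"
    by blast
  show ?case
  proof (cases "L (Suc N) = L N")
    case True
    then show ?thesis using Gs by metis
  next
    case False
    then have step: "L N \<subset> L (Suc N)" using monoD[OF assms, of N "Suc N"] by auto
    define Gs' where "Gs' i = (if i \<le> 1 then L (Suc N) else Gs (i - 1))" for i
    have "1 \<le> i \<and> i < Suc n \<longrightarrow> Gs' (Suc i) \<subset> Gs' i \<and> (\<exists>k. Gs' i = L (Suc k) \<and> Gs' (Suc i) = L k)" for i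
    proof (cases "i \<le> 1")
      case True
      then show ?thesis using step Gs(2) by (auto simp: Gs'_def le_Suc_eq)
    next
      case False
      then obtain j where "i = Suc j" "1 \<le> j" by (cases i) auto
      then show ?thesis using Gs(5) by (auto simp: Gs'_def)
    qed
    moreover have "\<exists>k. Gs' i = L k" for i using Gs(6) by (auto simp: Gs'_def)
    ultimately show ?thesis using Gs(1,3,4)
      by (intro exI[of _ Gs'] exI[of _ "Suc n"]) (auto simp: Gs'_def)
  qed
qed

lemma aut_order_dvd:
  assumes "0 < M" and "\<forall>x\<in>H. (\<psi> ^^ M) x = x"
  shows "aut_order H \<psi> dvd M"
proof -
  let ?fix = "\<lambda>n. 0 < n \<and> (\<forall>x\<in>H. (\<psi> ^^ n) x = x)"
  define d where "d = aut_order H \<psi>"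
  from assms have "?fix M" by simp
  then have d: "?fix d" unfolding d_def aut_order_def by (rule LeastI)
  have fix_mult: "(\<psi> ^^ (d * q)) x = x" if "x \<in> H" for q x
    using d that by (induction q) (simp_all add: funpow_add)
  have "(\<psi> ^^ (M mod d)) x = x" if "x \<in> H" for x
  proof -
    have "\<psi> ^^ M = \<psi> ^^ (M mod d) \<circ> \<psi> ^^ (d * (M div d))"
      by (metis funpow_add mult.commute mod_div_mult_eq)
    then show ?thesis using assms(2) fix_mult that by (metis comp_apply)
  qed
  moreover have "\<not> ?fix (M mod d)"
    using not_less_Least[of "M mod d" ?fix] d by (simp add: d_def aut_order_def)
  ultimately have "M mod d = 0" by auto
  then show ?thesis unfolding d_def by auto
qed

lemma core_subset: "core A' B' \<psi> \<subseteq> A'"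
proof
  fix x assume "x \<in> core A' B' \<psi>"
  then have "x \<in> core_seq A' B' \<psi> 0" unfolding core_def by blast
  then show "x \<in> A'" by simp
qed

lemma core_image:
  assumes "x \<in> core A' B' \<psi>"
  shows "\<psi> x \<in> core A' B' \<psi>"
proof -
  have "x \<in> core_seq A' B' \<psi> (Suc k)" for k using assms unfolding core_def by blast
  then have "\<psi> x \<in> core_seq A' B' \<psi> k" for k by auto
  then show ?thesis unfolding core_def by blast
qed

lemma core_funpow: "x \<in> core A' B' \<psi> \<Longrightarrow> (\<psi> ^^ m) x \<in> core A' B' \<psi>"
  by (induction m) (simp_all add: core_image)

section \<open>Filtrations pulled back from a finite \<open>p\<close>-group\<close>

locale pgroup_conj_embedding = group_hom G P f for G (structure) and P (structure) and f +
  fixes \<phi> A B t p e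
  assumes subgroup_A: "subgroup A G" and subgroup_B: "subgroup B G"
    and iso_\<phi>: "\<phi> \<in> iso (G\<lparr>carrier := A\<rparr>) (G\<lparr>carrier := B\<rparr>)"
    and inj_f: "inj_on f (carrier G)"
    and t_closed: "t \<in> carrier P"
    and f_\<phi>: "\<And>a. a \<in> A \<Longrightarrow> f (\<phi> a) = inv\<^bsub>P\<^esub> t \<otimes>\<^bsub>P\<^esub> f a \<otimes>\<^bsub>P\<^esub> t"
    and finite_P: "finite (carrier P)" and prime_p: "Factorial_Ring.prime p" and order_P: "order P = p ^ e"
begin

definition pullback :: "'c set \<Rightarrow> 'a set" where
  "pullback N = {x \<in> carrier G. f x \<in> N}"

lemma pullback_normal: "N \<lhd> P \<Longrightarrow> pullback N \<lhd> G"
  unfolding pullback_def by (rule normal_vimage)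

lemma pullback_rcos_eq_iff:
  "N \<lhd> P \<Longrightarrow> x \<in> carrier G \<Longrightarrow> y \<in> carrier G \<Longrightarrow>
    pullback N #> x = pullback N #> y \<longleftrightarrow> N #>\<^bsub>P\<^esub> f x = N #>\<^bsub>P\<^esub> f y"
  unfolding pullback_def by (rule vimage_rcos_eq_iff)

lemma \<phi>_closed: "a \<in> A \<Longrightarrow> \<phi> a \<in> B"
  using bij_betw_apply[OF iso_subgroupsD(1)[OF iso_\<phi>]] .

lemma \<phi>_mem_pullback_iff:
  assumes N: "N \<lhd> P" and a: "a \<in> A"
  shows "\<phi> a \<in> pullback N \<longleftrightarrow> a \<in> pullback N"
  using normal.conj_mem_iff[OF N t_closed, of "f a"] a \<phi>_closed[OF a] f_\<phi>[OF a]
    subgroup.subset[OF subgroup_A] subgroup.subset[OF subgroup_B]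
  by (auto simp: pullback_def)

lemma iso_pullback:
  assumes N: "N \<lhd> P"
  shows "\<phi> \<in> iso (G\<lparr>carrier := A \<inter> pullback N\<rparr>) (G\<lparr>carrier := B \<inter> pullback N\<rparr>)"
proof -
  note bij = iso_subgroupsD(1)[OF iso_\<phi>]
  have "\<phi> ` (A \<inter> pullback N) = B \<inter> pullback N"
  proof
    show "\<phi> ` (A \<inter> pullback N) \<subseteq> B \<inter> pullback N"
      using \<phi>_closed \<phi>_mem_pullback_iff[OF N] by auto
    show "B \<inter> pullback N \<subseteq> \<phi> ` (A \<inter> pullback N)"
    proof
      fix b assume b: "b \<in> B \<inter> pullback N"
      then obtain a where "a \<in> A" "b = \<phi> a" using bij by (auto simp: bij_betw_def)
      then show "b \<in> \<phi> ` (A \<inter> pullback N)" using b \<phi>_mem_pullback_iff[OF N] by auto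
    qed
  qed
  moreover have "inj_on \<phi> (A \<inter> pullback N)" using bij inj_on_subset[of \<phi> A] by (auto simp: bij_betw_def)
  ultimately show ?thesis
    using iso_subgroupsD(2)[OF iso_\<phi>] by (auto simp: iso_def hom_def bij_betw_def)
qed

text \<open>In \<open>G*\<close>, \<open>c\<^sub>b \<circ> \<phi> \<circ> c\<^sub>a\<close> is conjugation by \<open>a t b\<close>; this is its image in \<open>P\<close>.\<close>
definition twist_element :: "'a \<Rightarrow> 'a \<Rightarrow> 'c" where
  "twist_element a b = f a \<otimes>\<^bsub>P\<^esub> t \<otimes>\<^bsub>P\<^esub> f b"

lemma twist_element_closed: "a \<in> carrier G \<Longrightarrow> b \<in> carrier G \<Longrightarrow> twist_element a b \<in> carrier P"
  unfolding twist_element_def using t_closed by simp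

lemma twisted_map_lift:
  assumes N: "N \<lhd> P" and a: "a \<in> A" and b: "b \<in> B"
    and D: "D \<in> sub_quot G A Gi (pullback N)" and y: "y \<in> carrier G" and Dy: "D = pullback N #> y"
  shows "\<exists>y'\<in>carrier G. twisted_map G \<phi> A Gi (pullback N) a b D = pullback N #> y' \<and>
     N #>\<^bsub>P\<^esub> f y' = N #>\<^bsub>P\<^esub> (inv\<^bsub>P\<^esub> twist_element a b \<otimes>\<^bsub>P\<^esub> f y \<otimes>\<^bsub>P\<^esub> twist_element a b)"
proof -
  let ?K = "pullback N" and ?c = "twist_element a b"
  have Ac: "A \<subseteq> carrier G" and Bc: "B \<subseteq> carrier G"
    using subgroup.subset[OF subgroup_A] subgroup.subset[OF subgroup_B] .
  define x where "x = (SOME x. x \<in> A \<inter> Gi \<and> D = ?K #> x)"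
  have "\<exists>x. x \<in> A \<inter> Gi \<and> D = ?K #> x" using D unfolding sub_quot_def by auto
  then have x: "x \<in> A" "D = ?K #> x" unfolding x_def by (metis (mono_tags, lifting) IntD1 someI_ex)+
  define w where "w = inv a \<otimes> x \<otimes> a"
  have w: "w \<in> A" unfolding w_def
    using x(1) a subgroup.m_closed[OF subgroup_A] subgroup.m_inv_closed[OF subgroup_A] by blast
  define y' where "y' = inv b \<otimes> \<phi> w \<otimes> b"
  have ac: "a \<in> carrier G" and bc: "b \<in> carrier G" and xc: "x \<in> carrier G"
    using a b x(1) Ac Bc by auto
  have \<phi>w: "\<phi> w \<in> carrier G" using \<phi>_closed[OF w] Bc by auto
  have y'c: "y' \<in> carrier G" unfolding y'_def using \<phi>w bc by simp
  have "twisted_map G \<phi> A Gi ?K a b D = ?K #> y'"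
    unfolding twisted_map_def y'_def w_def x_def ..
  moreover have "f y' = inv\<^bsub>P\<^esub> ?c \<otimes>\<^bsub>P\<^esub> f x \<otimes>\<^bsub>P\<^esub> ?c"
  proof -
    have fw: "f w = inv\<^bsub>P\<^esub> f a \<otimes>\<^bsub>P\<^esub> f x \<otimes>\<^bsub>P\<^esub> f a" using ac xc by (simp add: w_def)
    have "f y' = inv\<^bsub>P\<^esub> f b \<otimes>\<^bsub>P\<^esub> (inv\<^bsub>P\<^esub> t \<otimes>\<^bsub>P\<^esub> f w \<otimes>\<^bsub>P\<^esub> t) \<otimes>\<^bsub>P\<^esub> f b"
      using bc \<phi>w f_\<phi>[OF w] by (simp add: y'_def)
    also have "\<dots> = inv\<^bsub>P\<^esub> f b \<otimes>\<^bsub>P\<^esub> (inv\<^bsub>P\<^esub> (f a \<otimes>\<^bsub>P\<^esub> t) \<otimes>\<^bsub>P\<^esub> f x \<otimes>\<^bsub>P\<^esub> (f a \<otimes>\<^bsub>P\<^esub> t)) \<otimes>\<^bsub>P\<^esub> f b"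
      unfolding fw using ac xc by (simp only: H.conj_conj[OF _ t_closed] hom_closed)
    also have "\<dots> = inv\<^bsub>P\<^esub> ?c \<otimes>\<^bsub>P\<^esub> f x \<otimes>\<^bsub>P\<^esub> ?c"
      unfolding twist_element_def using ac bc xc t_closed
      by (simp only: H.conj_conj[OF H.m_closed[OF _ t_closed]] hom_closed)
    finally show ?thesis .
  qed
  moreover have "N #>\<^bsub>P\<^esub> f x = N #>\<^bsub>P\<^esub> f y"
    using pullback_rcos_eq_iff[OF N xc y] x(2) Dy by simp
  then have "N #>\<^bsub>P\<^esub> (inv\<^bsub>P\<^esub> ?c \<otimes>\<^bsub>P\<^esub> f x \<otimes>\<^bsub>P\<^esub> ?c) = N #>\<^bsub>P\<^esub> (inv\<^bsub>P\<^esub> ?c \<otimes>\<^bsub>P\<^esub> f y \<otimes>\<^bsub>P\<^esub> ?c)"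
    by (rule normal.rcos_conj_cong[OF N _ hom_closed[OF xc] hom_closed[OF y] twist_element_closed[OF ac bc]])
  ultimately show ?thesis using y'c by auto
qed

lemma twisted_map_funpow:
  fixes N :: "'c set" and Gi :: "'a set" and a b :: 'a
  defines "\<psi> \<equiv> twisted_map G \<phi> A Gi (pullback N) a b" and "c \<equiv> twist_element a b"
  assumes N: "N \<lhd> P" and a: "a \<in> A" and b: "b \<in> B"
    and C: "C \<in> core (sub_quot G A Gi (pullback N)) (sub_quot G B Gi (pullback N)) \<psi>"
    and x0: "x0 \<in> carrier G" "C = pullback N #> x0"
  shows "\<exists>y\<in>carrier G. (\<psi> ^^ m) C = pullback N #> y \<and>
    N #>\<^bsub>P\<^esub> f y = N #>\<^bsub>P\<^esub> (inv\<^bsub>P\<^esub> (c [^]\<^bsub>P\<^esub> m) \<otimes>\<^bsub>P\<^esub> f x0 \<otimes>\<^bsub>P\<^esub> c [^]\<^bsub>P\<^esub> m)"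
proof (induction m)
  case 0
  show ?case using x0 by (intro bexI[of _ x0] conjI) simp_all
next
  case (Suc m)
  then obtain y where y: "y \<in> carrier G" "(\<psi> ^^ m) C = pullback N #> y"
    "N #>\<^bsub>P\<^esub> f y = N #>\<^bsub>P\<^esub> (inv\<^bsub>P\<^esub> (c [^]\<^bsub>P\<^esub> m) \<otimes>\<^bsub>P\<^esub> f x0 \<otimes>\<^bsub>P\<^esub> c [^]\<^bsub>P\<^esub> m)"
    by (elim bexE conjE)
  have "(\<psi> ^^ m) C \<in> sub_quot G A Gi (pullback N)"
    using subsetD[OF core_subset core_funpow[OF C]] .
  then obtain y' where y': "y' \<in> carrier G" "\<psi> ((\<psi> ^^ m) C) = pullback N #> y'"
    "N #>\<^bsub>P\<^esub> f y' = N #>\<^bsub>P\<^esub> (inv\<^bsub>P\<^esub> c \<otimes>\<^bsub>P\<^esub> f y \<otimes>\<^bsub>P\<^esub> c)"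
    using twisted_map_lift[OF N a b _ y(1,2)] unfolding \<psi>_def c_def by blast
  have cc: "c \<in> carrier P" unfolding c_def
    using twist_element_closed a b subgroup.subset[OF subgroup_A] subgroup.subset[OF subgroup_B] by blast
  have "N #>\<^bsub>P\<^esub> (inv\<^bsub>P\<^esub> c \<otimes>\<^bsub>P\<^esub> f y \<otimes>\<^bsub>P\<^esub> c) =
      N #>\<^bsub>P\<^esub> (inv\<^bsub>P\<^esub> c \<otimes>\<^bsub>P\<^esub> (inv\<^bsub>P\<^esub> (c [^]\<^bsub>P\<^esub> m) \<otimes>\<^bsub>P\<^esub> f x0 \<otimes>\<^bsub>P\<^esub> c [^]\<^bsub>P\<^esub> m) \<otimes>\<^bsub>P\<^esub> c)"
    by (rule normal.rcos_conj_cong[OF N y(3)]) (use y(1) x0(1) cc in simp_all)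
  also have "\<dots> = N #>\<^bsub>P\<^esub> (inv\<^bsub>P\<^esub> (c [^]\<^bsub>P\<^esub> Suc m) \<otimes>\<^bsub>P\<^esub> f x0 \<otimes>\<^bsub>P\<^esub> c [^]\<^bsub>P\<^esub> Suc m)"
    using H.conj_conj[OF H.nat_pow_closed[OF cc] cc hom_closed[OF x0(1)], of m] by simp
  finally show ?case using y' by auto
qed

theorem core_aut_order_prime_power:
  assumes N: "N \<lhd> P" and a: "a \<in> A" and b: "b \<in> B"
  shows "\<exists>k. aut_order (core (sub_quot G A Gi (pullback N)) (sub_quot G B Gi (pullback N))
      (twisted_map G \<phi> A Gi (pullback N) a b)) (twisted_map G \<phi> A Gi (pullback N) a b) = p ^ k"
proof -
  let ?\<psi> = "twisted_map G \<phi> A Gi (pullback N) a b" and ?c = "twist_element a b"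
  let ?H = "core (sub_quot G A Gi (pullback N)) (sub_quot G B Gi (pullback N)) ?\<psi>"
  have cc: "?c \<in> carrier P"
    using twist_element_closed a b subgroup.subset[OF subgroup_A] subgroup.subset[OF subgroup_B] by blast
  \<comment> \<open>the twisted map lifts to conjugation by \<open>c\<close>, and \<open>c\<^bsup>|P|\<^esup> = 1\<close>\<close>
  have "(?\<psi> ^^ order P) C = C" if C: "C \<in> ?H" for C
  proof -
    have "C \<in> sub_quot G A Gi (pullback N)" using subsetD[OF core_subset C] .
    then obtain x0 where x0: "x0 \<in> A" "C = pullback N #> x0" unfolding sub_quot_def by auto
    have x0c: "x0 \<in> carrier G" using x0(1) subgroup.subset[OF subgroup_A] by blast
    obtain y where y: "y \<in> carrier G" "(?\<psi> ^^ order P) C = pullback N #> y"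
      "N #>\<^bsub>P\<^esub> f y = N #>\<^bsub>P\<^esub> (inv\<^bsub>P\<^esub> (?c [^]\<^bsub>P\<^esub> order P) \<otimes>\<^bsub>P\<^esub> f x0 \<otimes>\<^bsub>P\<^esub> ?c [^]\<^bsub>P\<^esub> order P)"
      using twisted_map_funpow[OF N a b C x0c x0(2), of "order P"] by (elim bexE conjE)
    have "N #>\<^bsub>P\<^esub> f y = N #>\<^bsub>P\<^esub> f x0" using y(3) H.pow_order_eq_1[OF cc] x0c by simp
    then have "pullback N #> y = pullback N #> x0" using pullback_rcos_eq_iff[OF N y(1) x0c] by blast
    then show ?thesis using y(2) x0(2) by simp
  qed
  moreover have "0 < order P"
    using finite_P H.one_closed by (auto simp: order_def card_gt_0_iff)
  ultimately have "aut_order ?H ?\<psi> dvd order P" by (intro aut_order_dvd) auto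
  then show ?thesis using divides_primepow_nat[OF prime_p] order_P by auto
qed

lemma pullback_upper_central_series_bot: "pullback (upper_central_series P 0) = {\<one>}"
proof (intro equalityI subsetI)
  fix x assume "x \<in> pullback (upper_central_series P 0)"
  then have "x \<in> carrier G" "f x = f \<one>" by (simp_all add: pullback_def)
  then show "x \<in> {\<one>}" using inj_onD[OF inj_f] by blast
qed (simp add: pullback_def)

lemma pullback_upper_central_series_top: "pullback (upper_central_series P (order P)) = carrier G"
proof -
  have "pullback (upper_central_series P (order P)) = {x \<in> carrier G. f x \<in> carrier P}"
    using H.upper_central_series_order[OF finite_P order_P prime_p] by (simp add: pullback_def)
  also have "\<dots> = carrier G" by auto
  finally show ?thesis .
qed

lemma mono_pullback_upper_central_series: "mono (\<lambda>k. pullback (upper_central_series P k))"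
  using monoD[OF H.mono_upper_central_series] by (auto simp: mono_def pullback_def)

lemma pullback_upper_central_series_central:
  assumes "x \<in> pullback (upper_central_series P (Suc k))" "g \<in> carrier G"
  shows "pullback (upper_central_series P k) #> (x \<otimes> g) = pullback (upper_central_series P k) #> (g \<otimes> x)"
  using assms H.upper_central_series_central[of "f x" k "f g"]
    pullback_rcos_eq_iff[OF H.upper_central_series_normal, of "x \<otimes> g" "g \<otimes> x" k]
  by (simp add: pullback_def)

text \<open>The filtration is the pullback of the upper central series of \<open>P\<close>, with repetitions removed.\<close>
theorem exists_compatible_central_filtration:
  "\<exists>Gs n. central_filtration G Gs n \<and> compatible G \<phi> A B Gs \<and>
     (\<forall>i j a b. 1 \<le> i \<longrightarrow> i < j \<longrightarrow> a \<in> A \<inter> Gs i \<longrightarrow> b \<in> B \<inter> Gs i \<longrightarrow>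
        (\<exists>k. aut_order
               (core (sub_quot G A (Gs i) (Gs j)) (sub_quot G B (Gs i) (Gs j))
                     (twisted_map G \<phi> A (Gs i) (Gs j) a b))
               (twisted_map G \<phi> A (Gs i) (Gs j) a b) = p ^ k))"
proof -
  define L where "L k = pullback (upper_central_series P k)" for k
  obtain Gs n where Gs: "1 \<le> n" "Gs 1 = L (order P)" "Gs n = L 0" "\<forall>i. n < i \<longrightarrow> Gs i = L 0"
      "\<forall>i. 1 \<le> i \<and> i < n \<longrightarrow> Gs (Suc i) \<subset> Gs i \<and> (\<exists>k. Gs i = L (Suc k) \<and> Gs (Suc i) = L k)"
      and Gs_L: "\<And>i. \<exists>k. Gs i = L k"
    using strict_chain_of_mono[OF mono_pullback_upper_central_series, of "order P", folded L_def]
    by (elim exE conjE) blast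
  have "Gs i \<lhd> G" for i
    using Gs_L[of i] pullback_normal[OF H.upper_central_series_normal] by (auto simp: L_def)
  then have "filtration G Gs n" unfolding filtration_def
    using Gs pullback_upper_central_series_bot pullback_upper_central_series_top by (auto simp: L_def)
  moreover have "Gs (Suc i) #> (x \<otimes> g) = Gs (Suc i) #> (g \<otimes> x)"
    if i: "1 \<le> i" and x: "x \<in> Gs i" and g: "g \<in> carrier G" for i x g
  proof (cases "i < n")
    case True
    then obtain k where "Gs i = L (Suc k)" "Gs (Suc i) = L k" using Gs(5) i by blast
    then show ?thesis using pullback_upper_central_series_central x g by (simp add: L_def)
  next
    case False
    then have "x = \<one>" using x Gs(3,4) pullback_upper_central_series_bot by (cases "i = n") (auto simp: L_def)
    then show ?thesis using g by simp
  qed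
  ultimately have "central_filtration G Gs n" unfolding central_filtration_def by blast
  moreover have "compatible G \<phi> A B Gs"
    unfolding compatible_def using Gs_L iso_pullback[OF H.upper_central_series_normal] by (metis L_def)
  moreover have "\<exists>k. aut_order
               (core (sub_quot G A (Gs i) (Gs j)) (sub_quot G B (Gs i) (Gs j))
                     (twisted_map G \<phi> A (Gs i) (Gs j) a b))
               (twisted_map G \<phi> A (Gs i) (Gs j) a b) = p ^ k"
    if "a \<in> A \<inter> Gs i" "b \<in> B \<inter> Gs i" for i j a b
    using Gs_L[of j] core_aut_order_prime_power[OF H.upper_central_series_normal] that by (auto simp: L_def)
  ultimately show ?thesis by blast
qed

end

theorem proposition1p4:
  fixes p :: nat and G :: "('g, 'm) monoid_scheme" and \<phi> :: "'g \<Rightarrow> 'g" and A B :: "'g set"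
  assumes "Factorial_Ring.prime p"
    and "group G" and "finite (carrier G)" and "\<exists>k. order G = p ^ k"
    and "subgroup A G" and "subgroup B G"
    and "\<phi> \<in> iso (G\<lparr>carrier := A\<rparr>) (G\<lparr>carrier := B\<rparr>)"
    and "residually_p p (HNN G \<phi> A)"
  shows "\<exists>Gs n. central_filtration G Gs n \<and> compatible G \<phi> A B Gs \<and>
           (\<forall>i j a b. 1 \<le> i \<longrightarrow> i < j \<longrightarrow> a \<in> A \<inter> Gs i \<longrightarrow> b \<in> B \<inter> Gs i \<longrightarrow>
              (\<exists>k. aut_order
                     (core (sub_quot G A (Gs i) (Gs j)) (sub_quot G B (Gs i) (Gs j))
                           (twisted_map G \<phi> A (Gs i) (Gs j) a b))
                     (twisted_map G \<phi> A (Gs i) (Gs j) a b) = p ^ k))"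
proof -
  interpret group G by fact
  obtain P :: "('g \<Rightarrow> 'g hnn_letter list set set) monoid" and f t e
    where P: "group P" "finite (carrier P)" "order P = p ^ e"
      and f: "f \<in> hom G P" "inj_on f (carrier G)"
      and t: "t \<in> carrier P" "\<forall>a\<in>A. f (\<phi> a) = inv\<^bsub>P\<^esub> t \<otimes>\<^bsub>P\<^esub> f a \<otimes>\<^bsub>P\<^esub> t"
    using residually_p_HNN_imp_embedding[OF assms(3,5-8)] by (elim exE conjE)
  interpret pgroup_conj_embedding G P f \<phi> A B t p e
    by (intro pgroup_conj_embedding.intro group_hom.intro group_hom_axioms.intro
        pgroup_conj_embedding_axioms.intro) (use assms P f t in auto)
  show ?thesis by (rule exists_compatible_central_filtration)
qed

end
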